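(* There is an absolute constant $c>0$ such that for all $p\in(0,0.1)$, $$\mathbb{P}_p(E)\le \exp\big[-c\,q^{-1}(\log q^{-1})^2\big].$$
   Context: Let $q=-\log(1-p)$, $A=\lceil 1/\sqrt q\rceil$, $B=\lfloor q^{-1}\log q^{-1}\rfloor$. Under $\mathbb{P}_p$, the initial configuration assigns independent states to sites of $\mathbb{Z}^2$: the origin is active with probability $p$, else empty; every other site is occupied with probability $p$, else empty. A rectangle is $\{a,\dots,c\}\times\{b,\dots,d\}\subset\mathbb{Z}^2$ with dimensions $(c-a+1,d-b+1)$; columns are $\{x\}\times\{b,\dots,d\}$, rows $\{a,\dots,c\}\times\{y\}$. A rectangle has a double gap in the columns (resp. rows) if two consecutive columns (resp. rows) consist entirely of initially empty sites; $G(R)$ is the event that $R$ has no double gap in the columns or rows. $E$ is the union of $G(R)$ over all rectangles $R$ containing the origin with one dimension in $[B-A-10,B-A]$ and the other in $[1,A]$. *)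

theory Defs
  imports "HOL-Probability.Probability"
begin

datatype state = Empty | Occupied | Active

type_synonym config = "int \<times> int \<Rightarrow> state"

definition site_pmf :: "real \<Rightarrow> int \<times> int \<Rightarrow> state pmf" where
  "site_pmf p x = map_pmf (\<lambda>b. if b then (if x = (0,0) then Active else Occupied) else Empty)
                          (bernoulli_pmf p)"

definition Pp :: "real \<Rightarrow> config measure" where
  "Pp p = (\<Pi>\<^sub>M x\<in>UNIV. measure_pmf (site_pmf p x))"

definition qq :: "real \<Rightarrow> real" where
  "qq p = - ln (1 - p)"

definition AA :: "real \<Rightarrow> int" where
  "AA p = \<lceil>1 / sqrt (qq p)\<rceil>"

definition BB :: "real \<Rightarrow> int" where
  "BB p = \<lfloor>(1 / qq p) * ln (1 / qq p)\<rfloor>"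

definition double_gap_cols :: "config \<Rightarrow> int \<Rightarrow> int \<Rightarrow> int \<Rightarrow> int \<Rightarrow> bool" where
  "double_gap_cols \<omega> a b c d \<longleftrightarrow>
     (\<exists>x. a \<le> x \<and> x + 1 \<le> c \<and> (\<forall>y\<in>{b..d}. \<omega> (x, y) = Empty \<and> \<omega> (x + 1, y) = Empty))"

definition double_gap_rows :: "config \<Rightarrow> int \<Rightarrow> int \<Rightarrow> int \<Rightarrow> int \<Rightarrow> bool" where
  "double_gap_rows \<omega> a b c d \<longleftrightarrow>
     (\<exists>y. b \<le> y \<and> y + 1 \<le> d \<and> (\<forall>x\<in>{a..c}. \<omega> (x, y) = Empty \<and> \<omega> (x, y + 1) = Empty))"

definition G :: "int \<Rightarrow> int \<Rightarrow> int \<Rightarrow> int \<Rightarrow> config set" where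
  "G a b c d = {\<omega>. \<not> double_gap_cols \<omega> a b c d \<and> \<not> double_gap_rows \<omega> a b c d}"

definition good_dims :: "real \<Rightarrow> int \<Rightarrow> int \<Rightarrow> bool" where
  "good_dims p w h \<longleftrightarrow>
     (BB p - AA p - 10 \<le> w \<and> w \<le> BB p - AA p \<and> 1 \<le> h \<and> h \<le> AA p) \<or>
     (BB p - AA p - 10 \<le> h \<and> h \<le> BB p - AA p \<and> 1 \<le> w \<and> w \<le> AA p)"

definition EE :: "real \<Rightarrow> config set" where
  "EE p = (\<Union>{G a b c d | a b c d. a \<le> 0 \<and> 0 \<le> c \<and> b \<le> 0 \<and> 0 \<le> d \<and>
                                  good_dims p (c - a + 1) (d - b + 1)})"

end

theory Submission
  imports Defs
begin

text \<open>If \<open>\<omega> \<in> E\<close>, some rectangle around the origin without double gaps has a side of length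
  at least \<open>B - A - 10\<close> and the other of length at most \<open>A\<close>. Along the long side it reaches
  distance about \<open>(B - A)/2\<close> in one of four directions, so each of \<open>m \<approx> (B - A)/4\<close>
  disjoint pairs of adjacent lines of length \<open>2A - 1\<close> in that direction contains a non-empty
  site. The union bound gives \<open>P(E) \<le> 4 (2(2A - 1)p)^m \<le> 4 q^(m/4)\<close>, which is of the
  required order since \<open>m \<approx> (1/q) log (1/q) / 4\<close>. For \<open>q\<close> bounded below, \<open>E\<close> misses the event
  that a fixed finite box is completely empty, whose probability is bounded below uniformly.\<close>

lemma prob_space_Pp: "prob_space (Pp p)"
  unfolding Pp_def by (rule prob_space_PiM) (simp add: prob_space_measure_pmf)

lemma space_Pp [simp]: "space (Pp p) = UNIV"
  unfolding Pp_def by (simp add: space_PiM)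

lemma sets_Pp_cylinder: "finite J \<Longrightarrow> {\<omega>. \<forall>z\<in>J. \<omega> z \<in> X z} \<in> sets (Pp p)"
proof -
  assume "finite J"
  then have "{\<omega>\<in>space (Pp p). \<forall>z\<in>J. \<omega> z \<in> X z} \<in> sets (Pp p)"
    unfolding Pp_def by measurable (rule measurable_compose[OF measurable_component_singleton], auto)
  then show ?thesis by simp
qed

lemma measure_Pp_cylinder:
  assumes "finite J"
  shows "measure (Pp p) {\<omega>. \<forall>z\<in>J. \<omega> z \<in> X z} = (\<Prod>z\<in>J. measure (site_pmf p z) (X z))"
proof -
  interpret product_prob_space "\<lambda>z. measure_pmf (site_pmf p z)" UNIV
    by (rule product_prob_spaceI) (simp add: prob_space_measure_pmf)
  have "emeasure (Pp p) {\<omega>. \<forall>z\<in>J. \<omega> z \<in> X z} = (\<Prod>z\<in>J. emeasure (site_pmf p z) (X z))"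
    using emeasure_PiM_Collect[of J X] assms unfolding Pp_def by (simp add: space_PiM)
  then show ?thesis
    by (simp add: finite_measure.emeasure_eq_measure[OF prob_space.finite_measure[OF prob_space_Pp]]
                  measure_pmf.emeasure_eq_measure prod_ennreal prod_nonneg)
qed

lemma measure_site_pmf_Empty:
  assumes "0 \<le> p" "p \<le> 1"
  shows "measure (site_pmf p z) {Empty} = 1 - p"
proof -
  have "(\<lambda>b. if b then (if z = (0,0) then Active else Occupied) else Empty) -` {Empty} = {False}"
    by auto
  then show ?thesis
    using assms unfolding site_pmf_def measure_map_pmf
    by (simp add: measure_pmf_single del: measure_map_pmf)
qed

lemma measure_site_pmf_not_Empty:
  "0 \<le> p \<Longrightarrow> p \<le> 1 \<Longrightarrow> measure (site_pmf p z) (- {Empty}) = p"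
  using measure_pmf.prob_compl[of "{Empty}" "site_pmf p z"] measure_site_pmf_Empty[of p z]
  by (simp add: Compl_eq_Diff_UNIV)

lemma blocks_occupied_eq_UN:
  "{\<omega>::config. \<forall>i<(m::nat). \<exists>z\<in>B i. \<omega> z \<noteq> Empty} =
     (\<Union>s\<in>PiE {..<m} B. {\<omega>. \<forall>z\<in>s ` {..<m}. \<omega> z \<in> - {Empty}})"
proof (intro equalityI subsetI)
  fix \<omega> :: config
  assume "\<omega> \<in> {\<omega>. \<forall>i<m. \<exists>z\<in>B i. \<omega> z \<noteq> Empty}"
  then have "\<forall>i\<in>{..<m}. \<exists>z. z \<in> B i \<and> \<omega> z \<noteq> Empty" by blast
  then obtain s where s: "\<And>i. i < m \<Longrightarrow> s i \<in> B i \<and> \<omega> (s i) \<noteq> Empty"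
    by (metis bchoice lessThan_iff)
  then have "restrict s {..<m} \<in> PiE {..<m} B" by auto
  with s show "\<omega> \<in> (\<Union>s\<in>PiE {..<m} B. {\<omega>. \<forall>z\<in>s ` {..<m}. \<omega> z \<in> - {Empty}})"
    by (intro UN_I[of "restrict s {..<m}"]) auto
qed (auto simp: PiE_iff)

lemma sets_Pp_blocks_occupied:
  assumes "\<And>i. i < (m::nat) \<Longrightarrow> finite (B i)"
  shows "{\<omega>. \<forall>i<m. \<exists>z\<in>B i. \<omega> z \<noteq> Empty} \<in> sets (Pp p)"
  unfolding blocks_occupied_eq_UN
proof (rule sets.finite_UN)
  show "finite (PiE {..<m} B)" using assms by (intro finite_PiE) auto
qed (rule sets_Pp_cylinder, simp)

text \<open>Union bound over the choice of one non-empty site per block; disjointness makes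
  the chosen sites distinct, so each choice has probability \<open>p ^ m\<close>.\<close>
lemma measure_Pp_blocks_occupied:
  assumes p: "0 \<le> p" "p \<le> 1"
    and fin: "\<And>i. i < m \<Longrightarrow> finite (B i)" and disj: "disjoint_family_on B {..<m}"
  shows "measure (Pp p) {\<omega>. \<forall>i<m. \<exists>z\<in>B i. \<omega> z \<noteq> Empty} \<le> (\<Prod>i<m. real (card (B i))) * p ^ m"
proof -
  interpret prob_space "Pp p" by (rule prob_space_Pp)
  let ?T = "\<lambda>s. {\<omega>. \<forall>z\<in>s ` {..<m}. \<omega> z \<in> - {Empty}}"
  have finPiE: "finite (PiE {..<m} B)" using fin by (intro finite_PiE) auto
  have "measure (Pp p) (?T s) = p ^ m" if s: "s \<in> PiE {..<m} B" for s
  proof -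
    have "inj_on s {..<m}"
    proof (rule inj_onI)
      fix i j assume ij: "i \<in> {..<m}" "j \<in> {..<m}" and eq: "s i = s j"
      then have "s i \<in> B i \<inter> B j" using s eq by (metis IntI PiE_mem)
      with ij disj show "i = j" unfolding disjoint_family_on_def by blast
    qed
    have "measure (Pp p) (?T s) = (\<Prod>z\<in>s ` {..<m}. measure (site_pmf p z) (- {Empty}))"
      by (rule measure_Pp_cylinder) simp
    also have "\<dots> = p ^ card (s ` {..<m})"
      by (simp add: measure_site_pmf_not_Empty[OF p])
    finally show ?thesis
      using \<open>inj_on s {..<m}\<close> by (simp add: card_image)
  qed
  note each = this
  have "?T ` PiE {..<m} B \<subseteq> sets (Pp p)"
    by (intro image_subsetI sets_Pp_cylinder finite_imageI finite_lessThan)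
  then have "measure (Pp p) (\<Union>s\<in>PiE {..<m} B. ?T s) \<le> (\<Sum>s\<in>PiE {..<m} B. measure (Pp p) (?T s))"
    by (rule finite_measure_subadditive_finite[OF finPiE])
  also have "\<dots> = (\<Sum>s\<in>PiE {..<m} B. p ^ m)"
    using each by (rule sum.cong[OF refl])
  also have "\<dots> = (\<Prod>i<m. real (card (B i))) * p ^ m"
    by (simp add: card_PiE)
  finally show ?thesis by (subst blocks_occupied_eq_UN)
qed

text \<open>An arm is a sequence of disjoint pairs of adjacent columns (or rows) of height \<open>2A - 1\<close>
  leaving the origin; its i-th pair is \<open>{x, x + 1}\<close> with \<open>x = arm_start s i\<close>, on the positive
  side iff \<open>s\<close>.\<close>
definition arm_start :: "bool \<Rightarrow> nat \<Rightarrow> int" where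
  "arm_start s i = (if s then 2 * int i else - 2 * int i - 1)"

definition col_pair :: "int \<Rightarrow> int \<Rightarrow> (int \<times> int) set" where
  "col_pair A x = {x, x + 1} \<times> {1 - A..A - 1}"

definition row_pair :: "int \<Rightarrow> int \<Rightarrow> (int \<times> int) set" where
  "row_pair A y = {1 - A..A - 1} \<times> {y, y + 1}"

definition arm_block :: "int \<Rightarrow> bool \<times> bool \<Rightarrow> nat \<Rightarrow> (int \<times> int) set" where
  "arm_block A e i =
     (if fst e then col_pair A (arm_start (snd e) i) else row_pair A (arm_start (snd e) i))"

lemma finite_arm_block: "finite (arm_block A e i)"
  by (simp add: arm_block_def col_pair_def row_pair_def)

lemma card_arm_block: "1 \<le> A \<Longrightarrow> real (card (arm_block A e i)) = 2 * (2 * real_of_int A - 1)"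
  by (simp add: arm_block_def col_pair_def row_pair_def card_cartesian_product)

lemma disjoint_family_arm_block: "disjoint_family (arm_block A e)"
  unfolding disjoint_family_on_def arm_block_def col_pair_def row_pair_def arm_start_def
  by auto

lemma interval_contains_arm:
  fixes a c :: int
  assumes "a \<le> 0" "0 \<le> c" "4 * int m \<le> c - a + 3"
  obtains s where "\<And>i. i < m \<Longrightarrow> a \<le> arm_start s i \<and> arm_start s i + 1 \<le> c"
proof (cases "2 * int m - 1 \<le> c")
  case True
  then show ?thesis using assms by (intro that[of True]) (auto simp: arm_start_def)
next
  case False
  then show ?thesis using assms by (intro that[of False]) (auto simp: arm_start_def)
qed

lemma col_pair_occupied:
  assumes "\<not> double_gap_cols \<omega> a b c d" "b \<le> 0" "0 \<le> d" "d - b + 1 \<le> A" "a \<le> x" "x + 1 \<le> c"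
  shows "\<exists>z\<in>col_pair A x. \<omega> z \<noteq> Empty"
proof -
  obtain y where "y \<in> {b..d}" "\<omega> (x, y) \<noteq> Empty \<or> \<omega> (x + 1, y) \<noteq> Empty"
    using assms(1,5,6) unfolding double_gap_cols_def by blast
  then show ?thesis using assms(2-4) unfolding col_pair_def by auto
qed

lemma row_pair_occupied:
  assumes "\<not> double_gap_rows \<omega> a b c d" "a \<le> 0" "0 \<le> c" "c - a + 1 \<le> A" "b \<le> y" "y + 1 \<le> d"
  shows "\<exists>z\<in>row_pair A y. \<omega> z \<noteq> Empty"
proof -
  obtain x where "x \<in> {a..c}" "\<omega> (x, y) \<noteq> Empty \<or> \<omega> (x, y + 1) \<noteq> Empty"
    using assms(1,5,6) unfolding double_gap_rows_def by blast
  then show ?thesis using assms(2-4) unfolding row_pair_def by auto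
qed

lemma EE_arm_occupied:
  assumes "\<omega> \<in> EE p" and m: "4 * int m \<le> BB p - AA p - 8"
  shows "\<exists>e. \<forall>i<m. \<exists>z\<in>arm_block (AA p) e i. \<omega> z \<noteq> Empty"
proof -
  obtain a b c d where r: "a \<le> 0" "0 \<le> c" "b \<le> 0" "0 \<le> d"
    and dims: "good_dims p (c - a + 1) (d - b + 1)" and G: "\<omega> \<in> G a b c d"
    using assms(1) unfolding EE_def by blast
  from dims consider
      (wide) "BB p - AA p - 10 \<le> c - a + 1" "d - b + 1 \<le> AA p"
    | (tall) "BB p - AA p - 10 \<le> d - b + 1" "c - a + 1 \<le> AA p"
    unfolding good_dims_def by blast
  then show ?thesis
  proof cases
    case wide
    obtain s where "\<And>i. i < m \<Longrightarrow> a \<le> arm_start s i \<and> arm_start s i + 1 \<le> c"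
      using interval_contains_arm[of a c m] r wide m by auto
    then show ?thesis
      using col_pair_occupied[of \<omega> a b c d "AA p"] G r wide
      by (intro exI[of _ "(True, s)"]) (simp add: arm_block_def G_def)
  next
    case tall
    obtain s where "\<And>i. i < m \<Longrightarrow> b \<le> arm_start s i \<and> arm_start s i + 1 \<le> d"
      using interval_contains_arm[of b d m] r tall m by auto
    then show ?thesis
      using row_pair_occupied[of \<omega> a b c d "AA p"] G r tall
      by (intro exI[of _ "(False, s)"]) (simp add: arm_block_def G_def)
  qed
qed

lemma measure_EE_le_arms:
  assumes p: "0 \<le> p" "p \<le> 1" and A: "1 \<le> AA p" and m: "4 * int m \<le> BB p - AA p - 8"
  shows "measure (Pp p) (EE p) \<le> 4 * (2 * (2 * real_of_int (AA p) - 1) * p) ^ m"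
proof -
  interpret prob_space "Pp p" by (rule prob_space_Pp)
  define Arm where "Arm e = {\<omega>. \<forall>i<m. \<exists>z\<in>arm_block (AA p) e i. \<omega> z \<noteq> Empty}" for e
  have sets: "Arm e \<in> sets (Pp p)" for e
    unfolding Arm_def by (rule sets_Pp_blocks_occupied) (rule finite_arm_block)
  have bound: "measure (Pp p) (Arm e) \<le> (2 * (2 * real_of_int (AA p) - 1) * p) ^ m" for e
    using measure_Pp_blocks_occupied[OF p, of m "arm_block (AA p) e"]
      disjoint_family_on_mono[OF subset_UNIV disjoint_family_arm_block]
    by (simp add: Arm_def finite_arm_block card_arm_block[OF A] power_mult_distrib)
  have "EE p \<subseteq> (\<Union>e. Arm e)"
    using EE_arm_occupied[OF _ m] unfolding Arm_def by blast
  then have "measure (Pp p) (EE p) \<le> measure (Pp p) (\<Union>e. Arm e)"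
    using sets by (intro finite_measure_mono) auto
  also have "\<dots> \<le> (\<Sum>e\<in>UNIV. measure (Pp p) (Arm e))"
    using sets by (intro finite_measure_subadditive_finite) auto
  also have "\<dots> \<le> (\<Sum>e\<in>(UNIV :: (bool \<times> bool) set). (2 * (2 * real_of_int (AA p) - 1) * p) ^ m)"
    by (intro sum_mono bound)
  also have "\<dots> = 4 * (2 * (2 * real_of_int (AA p) - 1) * p) ^ m"
    by (simp add: UNIV_Times_UNIV[symmetric] del: UNIV_Times_UNIV)
  finally show ?thesis .
qed

lemma EE_hits_box:
  assumes "\<omega> \<in> EE p" "12 \<le> BB p - AA p" "BB p - AA p \<le> K" "AA p \<le> K"
  shows "\<exists>z\<in>{-K..K} \<times> {-K..K}. \<omega> z \<noteq> Empty"
proof (rule ccontr)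
  assume empty: "\<not> ?thesis"
  obtain a b c d where r: "a \<le> 0" "0 \<le> c" "b \<le> 0" "0 \<le> d"
    and dims: "good_dims p (c - a + 1) (d - b + 1)" and G: "\<omega> \<in> G a b c d"
    using assms(1) unfolding EE_def by blast
  from dims consider
      (wide) "BB p - AA p - 10 \<le> c - a + 1" "c - a + 1 \<le> BB p - AA p" "d - b + 1 \<le> AA p"
    | (tall) "BB p - AA p - 10 \<le> d - b + 1" "d - b + 1 \<le> BB p - AA p" "c - a + 1 \<le> AA p"
    unfolding good_dims_def by blast
  then show False
  proof cases
    case wide
    then have "double_gap_cols \<omega> a b c d"
      using r empty assms(2-4) unfolding double_gap_cols_def by (intro exI[of _ a]) auto
    then show False using G by (simp add: G_def)
  next
    case tall
    then have "double_gap_rows \<omega> a b c d"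
      using r empty assms(2-4) unfolding double_gap_rows_def by (intro exI[of _ b]) auto
    then show False using G by (simp add: G_def)
  qed
qed

lemma measure_EE_le_box:
  assumes p: "0 \<le> p" "p \<le> 1" and "12 \<le> BB p - AA p" "BB p - AA p \<le> K" "AA p \<le> K"
  shows "measure (Pp p) (EE p) \<le> 1 - (1 - p) ^ card ({-K..K} \<times> {-K..K})"
proof -
  interpret prob_space "Pp p" by (rule prob_space_Pp)
  define Box where "Box = {-K..K} \<times> {-K..K}"
  define Vacant where "Vacant = {\<omega>. \<forall>z\<in>Box. \<omega> z \<in> {Empty}}"
  have fin: "finite Box" by (simp add: Box_def)
  then have sets: "Vacant \<in> sets (Pp p)" unfolding Vacant_def by (rule sets_Pp_cylinder)
  have "EE p \<subseteq> space (Pp p) - Vacant"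
    using EE_hits_box[OF _ assms(3-5)] unfolding Vacant_def Box_def by auto
  then have "measure (Pp p) (EE p) \<le> measure (Pp p) (space (Pp p) - Vacant)"
    using sets by (intro finite_measure_mono sets.compl_sets)
  also have "\<dots> = 1 - measure (Pp p) Vacant"
    using sets by (rule prob_compl)
  also have "measure (Pp p) Vacant = (1 - p) ^ card Box"
    unfolding Vacant_def measure_Pp_cylinder[OF fin] by (simp add: measure_site_pmf_Empty[OF p])
  finally show ?thesis unfolding Box_def .
qed

lemma qq_bounds:
  assumes "0 < p" "p < 0.1"
  shows "p \<le> qq p" "9 \<le> 1 / qq p"
proof -
  show q: "p \<le> qq p"
    using ln_le_minus_one[of "1 - p"] assms unfolding qq_def by simp
  have "qq p = ln (1 / (1 - p))"
    using assms by (simp add: qq_def ln_div)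
  also have "\<dots> \<le> 1 / (1 - p) - 1"
    using assms by (intro ln_le_minus_one) auto
  also have "\<dots> \<le> 1 / 9"
    using assms by (simp add: field_simps)
  finally show "9 \<le> 1 / qq p"
    using q assms by (simp add: field_simps)
qed

lemma AA_BB_bounds:
  assumes "0 < p" "p < 0.1"
  defines "x \<equiv> 1 / qq p"
  shows "sqrt x \<le> AA p" "AA p \<le> sqrt x + 1" "x * ln x - 1 \<le> BB p" "BB p \<le> x * ln x"
proof -
  have "AA p = \<lceil>sqrt x\<rceil>" "BB p = \<lfloor>x * ln x\<rfloor>"
    unfolding AA_def BB_def x_def by (simp_all add: real_sqrt_divide)
  then show "sqrt x \<le> AA p" "AA p \<le> sqrt x + 1" "x * ln x - 1 \<le> BB p" "BB p \<le> x * ln x"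
    by linarith+
qed

lemma ln_ge_2: "9 \<le> (x::real) \<Longrightarrow> 2 \<le> ln x"
proof -
  assume x: "9 \<le> x"
  have "exp (2::real) = exp 1 ^ 2" by (simp add: exp_of_nat_mult[symmetric])
  also have "\<dots> \<le> 3 ^ 2" using exp_le by (intro power_mono) auto
  finally show ?thesis using x by (simp add: ln_ge_iff)
qed

lemma mult_ln_square_le_cube: "1 \<le> (x::real) \<Longrightarrow> x * (ln x)\<^sup>2 \<le> x ^ 3"
  using ln_le_minus_one[of x] ln_ge_zero[of x]
  by (simp add: power3_eq_cube power2_eq_square mult_mono)

lemma arm_bound_le_exp:
  fixes x r :: real
  assumes x: "625 \<le> x" and r: "0 \<le> r" "r \<le> 5 / sqrt x" and m: "x * ln x \<le> 8 * real m"
  shows "4 * r ^ m \<le> exp (- (1/64) * x * (ln x)\<^sup>2)"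
proof -
  define t where "t = sqrt (sqrt x)"
  have "25 \<le> sqrt x" using x by (intro real_le_rsqrt) simp
  then have t5: "5 \<le> t" unfolding t_def by (intro real_le_rsqrt) (simp add: x)
  have tt: "t * t = sqrt x" using x unfolding t_def by simp
  have lt: "ln t = ln x / 4" using x unfolding t_def by (simp add: ln_sqrt)
  have lx: "2 \<le> ln x" using x by (intro ln_ge_2) simp
  have "r \<le> 5 / (t * t)" using r tt by simp
  also have "\<dots> \<le> 1 / t" using t5 by (simp add: field_simps)
  finally have "r ^ m \<le> (1 / t) ^ m" using r by (intro power_mono)
  also have "\<dots> = exp (- (real m * ln t))"
    using t5 by (simp add: exp_minus exp_of_nat_mult power_one_over inverse_eq_divide)
  also have "\<dots> \<le> exp (- (1/32) * x * (ln x)\<^sup>2)"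
    using mult_right_mono[OF m, of "ln x"] lx unfolding lt by (simp add: power2_eq_square)
  finally have rm: "r ^ m \<le> exp (- (1/32) * x * (ln x)\<^sup>2)" .
  have "3 \<le> (1/64) * x * (ln x)\<^sup>2"
    using x mult_mono[OF x power_mono[OF lx, of 2]] by simp
  then have "4 \<le> exp ((1/64) * x * (ln x)\<^sup>2)"
    using exp_ge_add_one_self[of "(1/64) * x * (ln x)\<^sup>2"] by linarith
  then have "4 * r ^ m \<le> exp ((1/64) * x * (ln x)\<^sup>2) * exp (- (1/32) * x * (ln x)\<^sup>2)"
    using rm r by (intro mult_mono) auto
  also have "\<dots> = exp (- (1/64) * x * (ln x)\<^sup>2)"
    by (simp add: exp_add[symmetric])
  finally show ?thesis .
qed

lemma measure_EE_small_q:
  assumes p: "0 < p" "p < 0.1" and x: "625 \<le> 1 / qq p"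
  shows "measure (Pp p) (EE p) \<le> exp (- (1/64) * (1 / qq p) * (ln (1 / qq p))\<^sup>2)"
proof -
  define x where "x = 1 / qq p"
  note AB = AA_BB_bounds[OF p, folded x_def]
  have x625: "625 \<le> x" using x by (simp add: x_def)
  have px: "p \<le> 1 / x" using qq_bounds(1)[OF p] p by (simp add: x_def field_simps)
  have sx: "25 \<le> sqrt x" using x625 by (intro real_le_rsqrt) simp
  have sxx: "sqrt x * sqrt x = x" using x625 by simp
  have lx: "2 \<le> ln x" using x625 by (intro ln_ge_2) simp
  have A: "1 \<le> AA p" using AB(1) sx by linarith
  have sx25: "25 * sqrt x \<le> x" using mult_right_mono[OF sx, of "sqrt x"] sxx by simp
  have xl: "2 * x \<le> x * ln x" using mult_left_mono[OF lx, of x] x625 by simp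
  have BA: "x * ln x \<le> 2 * (real_of_int (BB p) - real_of_int (AA p) - 11)"
    using AB x625 sx25 xl by argo
  then have "8 \<le> real_of_int (BB p) - real_of_int (AA p)" using xl x625 by argo
  then have n: "0 \<le> BB p - AA p - 8" by (simp flip: of_int_diff)
  define n where "n = BB p - AA p - 8"
  define m where "m = nat (n div 4)"
  have "int m = n div 4" using n by (simp add: m_def n_def)
  then have m4: "n - 3 \<le> 4 * int m \<and> 4 * int m \<le> n" by presburger
  have "real_of_int (BB p) - real_of_int (AA p) - 11 \<le> 4 * real m"
    using of_int_le_iff[THEN iffD2, OF conjunct1[OF m4]] by (simp add: n_def)
  then have m8: "x * ln x \<le> 8 * real m" using BA by argo
  define r where "r = 2 * (2 * real_of_int (AA p) - 1) * p"
  have "2 * (2 * real_of_int (AA p) - 1) \<le> 5 * sqrt x" using AB(2) sx by argo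
  then have "r \<le> 5 * sqrt x * (1 / x)"
    unfolding r_def by (rule mult_mono[OF _ px]) (use p x625 in auto)
  also have "\<dots> = 5 * sqrt x / (sqrt x * sqrt x)" by (simp only: sxx) simp
  also have "\<dots> = 5 / sqrt x" using sx by (simp del: real_sqrt_mult_self)
  finally have r: "r \<le> 5 / sqrt x" .
  have "measure (Pp p) (EE p) \<le> 4 * r ^ m"
    unfolding r_def using p A conjunct2[OF m4] by (intro measure_EE_le_arms) (auto simp: n_def)
  also have "\<dots> \<le> exp (- (1/64) * x * (ln x)\<^sup>2)"
    using x625 r m8 p A by (intro arm_bound_le_exp) (auto simp: r_def)
  finally show ?thesis unfolding x_def .
qed

lemma measure_EE_moderate_q:
  assumes p: "0 < p" "p < 0.1" and x: "1 / qq p \<le> 625"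
  shows "measure (Pp p) (EE p) \<le> 1 - 0.9 ^ (10 ^ 12)"
proof -
  define x where "x = 1 / qq p"
  note AB = AA_BB_bounds[OF p, folded x_def]
  have x9: "9 \<le> x" using qq_bounds(2)[OF p] by (simp add: x_def)
  have x625: "x \<le> 625" using x by (simp add: x_def)
  have sx: "3 \<le> sqrt x" using x9 by (intro real_le_rsqrt) simp
  have "3 * sqrt x \<le> x" using mult_right_mono[OF sx, of "sqrt x"] x9 by simp
  moreover have "2 * x \<le> x * ln x" using ln_ge_2[OF x9] x9 by (simp add: mult_left_mono mult.commute)
  ultimately have BA: "12 \<le> BB p - AA p" using AB x9 by linarith
  have "x * ln x \<le> 625 * 625"
    using ln_le_minus_one[of x] x9 x625 mult_mono[OF x625, of "ln x" 625] by simp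
  then have B: "BB p \<le> 390625" using AB by linarith
  have "card ({- BB p..BB p} \<times> {- BB p..BB p}) = nat (2 * BB p + 1) * nat (2 * BB p + 1)"
    by (simp add: card_cartesian_product)
  also have "\<dots> \<le> 781251 * 781251" using B by (intro mult_mono) auto
  finally have card: "card ({- BB p..BB p} \<times> {- BB p..BB p}) \<le> 10 ^ 12" by simp
  have "measure (Pp p) (EE p) \<le> 1 - (1 - p) ^ card ({- BB p..BB p} \<times> {- BB p..BB p})"
    using p BA AB(1) sx by (intro measure_EE_le_box) auto
  also have "\<dots> \<le> 1 - 0.9 ^ card ({- BB p..BB p} \<times> {- BB p..BB p})"
    using p by (simp add: power_mono)
  also have "\<dots> \<le> 1 - 0.9 ^ (10 ^ 12)"
    using card by (simp add: power_decreasing)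
  finally show ?thesis .
qed

theorem lemma7:
  shows "\<exists>c>0. \<forall>p::real. 0 < p \<and> p < 0.1 \<longrightarrow>
           measure (Pp p) (EE p) \<le> exp (- c * (1 / qq p) * (ln (1 / qq p))\<^sup>2)"
proof -
  define \<delta> :: real where "\<delta> = 0.9 ^ (10 ^ 12)"
  define c where "c = min (1/64) (\<delta> / 625 ^ 3)"
  have "measure (Pp p) (EE p) \<le> exp (- (c * X))"
    if p: "0 < p" "p < 0.1" and X: "X = (1 / qq p) * (ln (1 / qq p))\<^sup>2" for p X
  proof (cases "625 \<le> 1 / qq p")
    case True
    have "measure (Pp p) (EE p) \<le> exp (- ((1/64) * X))"
      using measure_EE_small_q[OF p True] unfolding X by (simp add: mult.assoc)
    also have "\<dots> \<le> exp (- (c * X))"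
      using p qq_bounds(1)[OF p] mult_right_mono[OF min.cobounded1, of X "1/64"]
      by (auto simp: c_def X)
    finally show ?thesis .
  next
    case False
    have x: "1 \<le> 1 / qq p" "1 / qq p \<le> 625" using False qq_bounds(2)[OF p] by auto
    have "X \<le> 625 ^ 3"
      unfolding X
      using mult_ln_square_le_cube[OF x(1)] power_mono[OF x(2) order.trans[OF zero_le_one x(1)]]
      by (rule order_trans)
    moreover have "0 \<le> X"
      unfolding X using p qq_bounds(1)[OF p] by (intro mult_nonneg_nonneg) auto
    ultimately have "c * X \<le> (\<delta> / 625 ^ 3) * 625 ^ 3"
      by (intro mult_mono) (auto simp: c_def \<delta>_def)
    then show ?thesis
      using measure_EE_moderate_q[OF p False[unfolded not_le, THEN less_imp_le]]
        exp_ge_add_one_self[of "- (c * X)"] unfolding \<delta>_def by simp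
  qed
  moreover have "0 < c" by (simp add: c_def \<delta>_def)
  ultimately show ?thesis by (auto simp: mult.assoc)
qed

end
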